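(* Let $(M,J,g)$ be a metallic pseudo-Riemannian manifold with $J^2=pJ+qI$, where $p,q\in\mathbb{R}$ satisfy $p^2+4q\neq 0$. If $dJ=0$, then $\delta J=0$.
   Context: A metallic pseudo-Riemannian manifold $(M,J,g)$ is a manifold with a pseudo-Riemannian metric $g$ and a $g$-symmetric $(1,1)$-tensor field $J$ with $J^2=pJ+qI$ for real $p,q$. With $\nabla$ the Levi-Civita connection of $g$ and $\{E_i\}_{1\le i\le n}$ a local $g$-orthonormal frame, set $(dJ)(X,Y)=(\nabla_XJ)Y-(\nabla_YJ)X$ and $\delta J=-\sum_{i=1}^n(\nabla_{E_i}J)E_i$. *)

theory Defs
  imports "HOL-Analysis.Analysis"
begin

text \<open>Local coordinate model: a chart domain U (open subset of R^n, n = CARD('n)),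
  metric coefficients g x = (g_ij(x)) and the (1,1)-tensor J x = (J^k_j(x)),
  with (J x) $ k $ j = J^k_j.  Vectors act as columns: J X = J x *v X,
  g(X,Y) = X \<bullet> (g x *v Y).\<close>

definition partial :: "'n::finite \<Rightarrow> (real^'n \<Rightarrow> real) \<Rightarrow> real^'n \<Rightarrow> real" where
  "partial i f x = frechet_derivative f (at x) (axis i 1)"

fun iter_partial :: "'n::finite list \<Rightarrow> (real^'n \<Rightarrow> real) \<Rightarrow> real^'n \<Rightarrow> real" where
  "iter_partial [] f = f"
| "iter_partial (i # is) f = partial i (iter_partial is f)"

definition smooth_on :: "(real^'n::finite) set \<Rightarrow> (real^'n \<Rightarrow> real) \<Rightarrow> bool" where
  "smooth_on U f \<longleftrightarrow> (\<forall>is. \<forall>x\<in>U. iter_partial is f differentiable (at x))"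

definition gmetric :: "real^'n^'n \<Rightarrow> real^'n \<Rightarrow> real^'n \<Rightarrow> real" where
  "gmetric G X Y = X \<bullet> (G *v Y)"

definition christoffel :: "(real^'n \<Rightarrow> real^'n^'n) \<Rightarrow> real^'n \<Rightarrow> 'n::finite \<Rightarrow> 'n \<Rightarrow> 'n \<Rightarrow> real" where
  "christoffel g x k i j = (1/2) * (\<Sum>l\<in>UNIV. matrix_inv (g x) $ k $ l *
      (partial i (\<lambda>y. g y $ j $ l) x + partial j (\<lambda>y. g y $ i $ l) x
       - partial l (\<lambda>y. g y $ i $ j) x))"

text \<open>Components of nabla_{d_i} J : entry (k,j) is (nabla_i J)^k_j.\<close>
definition nablaJ_coord :: "(real^'n \<Rightarrow> real^'n^'n) \<Rightarrow> (real^'n \<Rightarrow> real^'n^'n) \<Rightarrow> real^'n \<Rightarrow> 'n::finite \<Rightarrow> real^'n^'n" where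
  "nablaJ_coord g J x i = (\<chi> k j. partial i (\<lambda>y. J y $ k $ j) x
      + (\<Sum>m\<in>UNIV. christoffel g x k i m * J x $ m $ j)
      - (\<Sum>m\<in>UNIV. christoffel g x m i j * J x $ k $ m))"

definition nablaJ :: "(real^'n \<Rightarrow> real^'n^'n) \<Rightarrow> (real^'n \<Rightarrow> real^'n^'n) \<Rightarrow> real^'n \<Rightarrow> real^'n \<Rightarrow> real^'n^'n::finite" where
  "nablaJ g J x X = (\<Sum>i\<in>UNIV. X $ i *\<^sub>R nablaJ_coord g J x i)"

definition dJ :: "(real^'n \<Rightarrow> real^'n^'n) \<Rightarrow> (real^'n \<Rightarrow> real^'n^'n) \<Rightarrow> real^'n \<Rightarrow> real^'n \<Rightarrow> real^'n \<Rightarrow> real^'n::finite" where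
  "dJ g J x X Y = nablaJ g J x X *v Y - nablaJ g J x Y *v X"

definition orthonormal_frame :: "real^'n^'n \<Rightarrow> ('n::finite \<Rightarrow> real^'n) \<Rightarrow> bool" where
  "orthonormal_frame G E \<longleftrightarrow>
     (\<forall>a b. a \<noteq> b \<longrightarrow> gmetric G (E a) (E b) = 0) \<and> (\<forall>a. \<bar>gmetric G (E a) (E a)\<bar> = 1)"

definition deltaJ :: "(real^'n \<Rightarrow> real^'n^'n) \<Rightarrow> (real^'n \<Rightarrow> real^'n^'n) \<Rightarrow> real^'n \<Rightarrow> ('n::finite \<Rightarrow> real^'n) \<Rightarrow> real^'n" where
  "deltaJ g J x E = - (\<Sum>a\<in>UNIV. gmetric (g x) (E a) (E a) *\<^sub>R (nablaJ g J x (E a) *v E a))"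

definition metallic_pR :: "(real^'n::finite) set \<Rightarrow> (real^'n \<Rightarrow> real^'n^'n) \<Rightarrow> (real^'n \<Rightarrow> real^'n^'n) \<Rightarrow> real \<Rightarrow> real \<Rightarrow> bool" where
  "metallic_pR U g J p q \<longleftrightarrow> open U \<and>
     (\<forall>i j. smooth_on U (\<lambda>y. g y $ i $ j) \<and> smooth_on U (\<lambda>y. J y $ i $ j)) \<and>
     (\<forall>x\<in>U. transpose (g x) = g x \<and> det (g x) \<noteq> 0 \<and>
        (\<forall>X Y. gmetric (g x) (J x *v X) Y = gmetric (g x) X (J x *v Y)) \<and>
        J x ** J x = p *\<^sub>R J x + q *\<^sub>R mat 1)"

end

theory Submission
  imports Defs
begin

text \<open>Each \<open>\<nabla>\<^sub>X J\<close> is g-self-adjoint, and differentiating \<open>J\<^sup>2 = pJ + qI\<close> gives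
  \<open>(\<nabla>\<^sub>X J)J + J(\<nabla>\<^sub>X J) = p \<nabla>\<^sub>X J\<close>; multiplying this by J and taking traces forces
  \<open>(p\<^sup>2 + 4q) tr(\<nabla>\<^sub>X J) = 0\<close>, so \<open>\<nabla>\<^sub>X J\<close> is trace-free. If \<open>dJ = 0\<close> then for every Y
  \<open>g(\<delta>J, Y) = -\<Sum>\<^sub>a \<epsilon>\<^sub>a g(E\<^sub>a, (\<nabla>\<^sub>E\<^sub>a J)Y) = -\<Sum>\<^sub>a \<epsilon>\<^sub>a g(E\<^sub>a, (\<nabla>\<^sub>Y J)E\<^sub>a) = -tr(\<nabla>\<^sub>Y J) = 0\<close>,
  and \<open>\<delta>J = 0\<close> because g is nondegenerate. Everything is computed in a chart, where
  \<open>\<nabla>\<^sub>i J = \<partial>\<^sub>i J + [\<Gamma>\<^sub>i, J]\<close> and metric compatibility reads \<open>\<partial>\<^sub>i g = g\<Gamma>\<^sub>i + \<Gamma>\<^sub>i\<^sup>T g\<close>.\<close>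

lemma matrix_add_rdistrib: "((A::real^'n^'m) + B) ** C = A ** C + B ** C"
  by (simp add: matrix_matrix_mult_def vec_eq_iff sum.distrib algebra_simps)

lemma matrix_diff_ldistrib: "(A::real^'n^'m) ** (B - C) = A ** B - A ** C"
  by (simp add: matrix_matrix_mult_def vec_eq_iff sum_subtractf algebra_simps)

lemma matrix_diff_rdistrib: "((A::real^'n^'m) - B) ** C = A ** C - B ** C"
  by (simp add: matrix_matrix_mult_def vec_eq_iff sum_subtractf algebra_simps)

lemma transpose_nth: "transpose A $ i $ j = A $ j $ i"
  by (simp add: transpose_def)

lemma transpose_zero: "transpose (0::real^'n^'m) = 0"
  by (simp add: transpose_def vec_eq_iff)

lemma transpose_add: "transpose ((A::real^'n^'m) + B) = transpose A + transpose B"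
  by (simp add: transpose_def vec_eq_iff)

lemma transpose_diff: "transpose ((A::real^'n^'m) - B) = transpose A - transpose B"
  by (simp add: transpose_def vec_eq_iff)

lemmas matrix_algebra_simps =
  matrix_add_ldistrib matrix_add_rdistrib matrix_diff_ldistrib matrix_diff_rdistrib
  matrix_scalar_ac scalar_matrix_assoc[symmetric] transpose_add transpose_diff transpose_scalar
  matrix_transpose_mul matrix_mul_assoc

lemma trace_scaleR: "trace (c *\<^sub>R (A::real^'n^'n)) = c * trace A"
  by (simp add: trace_def sum_distrib_left)

lemma trace_eq_zero_if_anticommutes_metallic:
  fixes J N :: "real^'n^'n"
  assumes JJ: "J ** J = p *\<^sub>R J + q *\<^sub>R mat 1"
    and NJ: "N ** J + J ** N = p *\<^sub>R N"
    and "p\<^sup>2 + 4 * q \<noteq> 0"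
  shows "trace N = 0"
proof -
  have tr_NJ: "2 * trace (N ** J) = p * trace N"
    using arg_cong[OF NJ, of trace] by (simp add: trace_add trace_scaleR trace_mul_sym[of J N])
  have "N ** J = p *\<^sub>R N - J ** N"
    using NJ by (simp add: eq_diff_eq)
  then have "J ** N ** J = J ** (p *\<^sub>R N - J ** N)"
    by (simp flip: matrix_mul_assoc)
  also have "\<dots> = - q *\<^sub>R N"
    using JJ by (simp add: matrix_algebra_simps)
  finally have "trace (J ** N ** J) = - q * trace N"
    by (simp add: trace_def sum_negf sum_distrib_left)
  moreover have "trace (J ** N ** J) = p * trace (N ** J) + q * trace N"
    using JJ trace_mul_sym[of "J ** N" J] trace_mul_sym[of J N]
    by (simp add: matrix_algebra_simps trace_add trace_scaleR trace_I)
  ultimately have "p * trace (N ** J) = - 2 * q * trace N"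
    by simp
  then have "(p\<^sup>2 + 4 * q) * trace N = 0"
    by (simp add: power2_eq_square algebra_simps flip: tr_NJ)
  with assms(3) show ?thesis by simp
qed

lemma subspace_anticommutes_metallic:
  "subspace {N :: real^'n^'n. N ** J + J ** N = p *\<^sub>R N}"
proof (unfold subspace_def, intro conjI ballI allI, goal_cases zero add scale)
  case zero
  show ?case by simp
next
  case (add M N)
  have "(M + N) ** J + J ** (M + N) = (M ** J + J ** M) + (N ** J + J ** N)"
    by (simp add: matrix_add_ldistrib matrix_add_rdistrib algebra_simps)
  with add show ?case
    by (simp add: scaleR_add_right)
next
  case (scale c N)
  then show ?case
    by (simp add: matrix_scalar_ac flip: scalar_matrix_assoc scaleR_add_right)
qed

lemma subspace_selfadjoint: "subspace {N :: real^'n^'n. transpose N ** G = G ** N}"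
  unfolding subspace_def
  by (simp add: transpose_zero transpose_add transpose_scalar matrix_add_ldistrib
      matrix_add_rdistrib matrix_scalar_ac flip: scalar_matrix_assoc)

lemma commutator_anticommutes_metallic:
  fixes J C :: "real^'n^'n"
  assumes "J ** J = p *\<^sub>R J + q *\<^sub>R mat 1"
  shows "(C ** J - J ** C) ** J + J ** (C ** J - J ** C) = p *\<^sub>R (C ** J - J ** C)"
proof -
  have "(C ** J - J ** C) ** J + J ** (C ** J - J ** C) = C ** (J ** J) - (J ** J) ** C"
    by (simp add: matrix_algebra_simps)
  then show ?thesis
    using assms by (simp add: matrix_algebra_simps algebra_simps)
qed

lemma inner_matrix_vector_mult: "((A::real^'n^'m) *v X) \<bullet> Y = X \<bullet> (transpose A *v Y)"
  by (metis dot_lmul_matrix vector_transpose_matrix)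

lemma gmetric_adjoint_iff:
  "(\<forall>X Y. gmetric G (A *v X) Y = gmetric G X (A *v Y)) \<longleftrightarrow> transpose A ** G = G ** A"
proof -
  have "gmetric G (A *v X) Y = X \<bullet> ((transpose A ** G) *v Y)"
    and "gmetric G X (A *v Y) = X \<bullet> ((G ** A) *v Y)" for X Y
    by (simp_all only: gmetric_def inner_matrix_vector_mult matrix_vector_mul_assoc)
  then show ?thesis
    by (metis matrix_eq vector_eq_ldot)
qed

text \<open>With D, G' the partial derivatives of J and g and C the Christoffel matrix, the matrix
  \<open>D + CJ - JC\<close> below is the covariant derivative of J.\<close>

lemma selfadjoint_derivative_plus_commutator:
  fixes G G' J D C :: "real^'n^'n"
  assumes J: "transpose J ** G = G ** J"
    and D: "G' ** J + G ** D = transpose D ** G + transpose J ** G'"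
    and G': "G' = G ** C + transpose C ** G"
  shows "transpose (D + C ** J - J ** C) ** G = G ** (D + C ** J - J ** C)"
proof -
  have CJ: "transpose C ** transpose J ** G = transpose C ** G ** J"
    by (metis J matrix_mul_assoc)
  have "G ** D - transpose D ** G = transpose J ** G' - G' ** J"
    using D by (simp add: algebra_simps)
  also have "\<dots> = (transpose J ** G) ** C + transpose J ** transpose C ** G
      - G ** C ** J - transpose C ** G ** J"
    unfolding G' by (simp add: matrix_algebra_simps)
  also have "\<dots> = G ** J ** C + transpose J ** transpose C ** G
      - G ** C ** J - transpose C ** transpose J ** G"
    by (simp only: J CJ)
  finally show ?thesis
    by (simp add: matrix_algebra_simps algebra_simps)
qed

lemma orthonormal_frame_trace:
  fixes G M :: "real^'n^'n"
  assumes frame: "orthonormal_frame G E"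
  shows "(\<Sum>a\<in>UNIV. gmetric G (E a) (E a) * gmetric G (E a) (M *v E a)) = trace M"
proof -
  txt \<open>With the frame as the columns of P, \<open>P\<^sup>T G P = \<epsilon>\<close> and \<open>\<epsilon>\<^sup>2 = 1\<close>, so \<open>P \<epsilon> P\<^sup>T\<close> inverts G.\<close>
  define P :: "real^'n^'n" where "P = (\<chi> k a. E a $ k)"
  define \<epsilon> :: "real^'n^'n" where "\<epsilon> = (\<chi> a b. if a = b then gmetric G (E a) (E a) else 0)"
  have gram: "(transpose P ** A ** P) $ a $ b = gmetric A (E a) (E b)"
    for A :: "real^'n^'n" and a b
  proof -
    have "(transpose P ** A ** P) $ a $ b = (\<Sum>k\<in>UNIV. \<Sum>m\<in>UNIV. E a $ m * A $ m $ k * E b $ k)"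
      by (simp add: P_def matrix_matrix_mult_def transpose_def sum_distrib_right)
    also have "\<dots> = (\<Sum>m\<in>UNIV. \<Sum>k\<in>UNIV. E a $ m * A $ m $ k * E b $ k)"
      by (rule sum.swap)
    also have "\<dots> = gmetric A (E a) (E b)"
      by (simp add: gmetric_def inner_vec_def matrix_vector_mult_def sum_distrib_left mult.assoc)
    finally show ?thesis .
  qed
  have entry: "(transpose P ** G ** P ** \<epsilon>) $ a $ b = gmetric G (E a) (E b) * gmetric G (E b) (E b)"
    for a b
    by (simp add: matrix_matrix_mult_def[of "transpose P ** G ** P"] gram \<epsilon>_def if_distrib
        cong: if_cong)
  have "(transpose P ** G) ** (P ** \<epsilon>) = mat 1"
  proof -
    have "(transpose P ** G ** P ** \<epsilon>) $ a $ b = mat 1 $ a $ b" for a b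
    proof (cases "a = b")
      case True
      have "\<bar>gmetric G (E b) (E b)\<bar> = 1"
        using frame by (simp add: orthonormal_frame_def)
      then have "gmetric G (E b) (E b) * gmetric G (E b) (E b) = 1"
        by (metis abs_mult_self_eq mult_1)
      with True show ?thesis
        by (simp add: entry mat_def)
    next
      case False
      with frame show ?thesis
        by (simp add: entry mat_def orthonormal_frame_def)
    qed
    then show ?thesis
      by (simp add: vec_eq_iff matrix_mul_assoc)
  qed
  then have inverse: "P ** \<epsilon> ** transpose P ** G = mat 1"
    using matrix_left_right_inverse by (metis matrix_mul_assoc)
  have "(\<Sum>a\<in>UNIV. gmetric G (E a) (E a) * gmetric G (E a) (M *v E a))
      = (\<Sum>a\<in>UNIV. \<epsilon> $ a $ a * (transpose P ** (G ** M) ** P) $ a $ a)"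
    by (simp add: gram \<epsilon>_def gmetric_def matrix_vector_mul_assoc)
  also have "\<dots> = trace (\<epsilon> ** (transpose P ** (G ** M) ** P))"
    unfolding trace_def matrix_matrix_mult_def[of \<epsilon>]
    by (simp add: \<epsilon>_def if_distrib if_distribR cong: if_cong)
  also have "\<dots> = trace ((P ** \<epsilon> ** transpose P ** G) ** M)"
    using trace_mul_sym[of "\<epsilon> ** transpose P ** (G ** M)" P] by (simp add: matrix_mul_assoc)
  also have "\<dots> = trace M"
    by (simp add: inverse)
  finally show ?thesis .
qed

lemma gmetric_nondegenerate:
  fixes G :: "real^'n^'n"
  assumes "det G \<noteq> 0" and "\<forall>Y. gmetric G X Y = 0"
  shows "X = 0"
proof -
  obtain G' where "G ** G' = mat 1"
    using assms(1) by (auto simp: invertible_det_nz[symmetric] invertible_def)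
  then have "X \<bullet> X = gmetric G X (G' *v X)"
    by (simp add: gmetric_def matrix_vector_mul_assoc)
  with assms(2) show ?thesis
    by simp
qed

lemma matrix_mul_matrix_inv:
  fixes A :: "real^'n^'n"
  assumes "det A \<noteq> 0"
  shows "A ** matrix_inv A = mat 1"
proof -
  have "\<exists>A'. A ** A' = mat 1 \<and> A' ** A = mat 1"
    using assms by (simp add: invertible_det_nz[symmetric] invertible_def)
  then show ?thesis
    unfolding matrix_inv_def by (rule someI2_ex) blast
qed

definition partial_matrix :: "'n::finite \<Rightarrow> (real^'n \<Rightarrow> real^'m^'k) \<Rightarrow> real^'n \<Rightarrow> real^'m^'k"
  where "partial_matrix i A x = (\<chi> k j. partial i (\<lambda>y. A y $ k $ j) x)"

definition christoffel_matrix :: "(real^'n \<Rightarrow> real^'n^'n) \<Rightarrow> real^'n \<Rightarrow> 'n::finite \<Rightarrow> real^'n^'n"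
  where "christoffel_matrix g x i = (\<chi> k j. christoffel g x k i j)"

lemma partial_eq_derivative: "(f has_derivative f') (at x) \<Longrightarrow> partial i f x = f' (axis i 1)"
  unfolding partial_def by (metis frechet_derivative_at)

lemma partial_cong_open:
  assumes "f differentiable (at x)" "open U" "x \<in> U" "\<And>y. y \<in> U \<Longrightarrow> f y = h y"
  shows "partial i f x = partial i h x"
  unfolding partial_def using frechet_derivative_transform_within_open[OF assms] by simp

lemma partial_matrix_cong_open:
  assumes "\<And>k j. (\<lambda>y. A y $ k $ j) differentiable (at x)" "open U" "x \<in> U"
    and "\<And>y. y \<in> U \<Longrightarrow> A y = B y"
  shows "partial_matrix i A x = partial_matrix i B x"
  unfolding partial_matrix_def vec_eq_iff
  using partial_cong_open[OF assms(1-3)] assms(4) by simp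

lemma partial_matrix_transpose:
  "partial_matrix i (\<lambda>y. transpose (A y)) x = transpose (partial_matrix i A x)"
  by (simp add: partial_matrix_def transpose_def)

lemma partial_matrix_scaleR_add_const:
  assumes "\<And>k j. (\<lambda>y. A y $ k $ j) differentiable (at x)"
  shows "partial_matrix i (\<lambda>y. c *\<^sub>R A y + C) x = c *\<^sub>R partial_matrix i A x"
proof -
  have "((\<lambda>y. c * A y $ k $ j + C $ k $ j) has_derivative
      (\<lambda>v. c * frechet_derivative (\<lambda>y. A y $ k $ j) (at x) v)) (at x)" for k j
    using assms by (auto intro!: derivative_eq_intros simp: frechet_derivative_works)
  from partial_eq_derivative[OF this] show ?thesis
    by (simp add: partial_matrix_def vec_eq_iff partial_def)
qed

lemma partial_matrix_mult:
  assumes "\<And>k j. (\<lambda>y. A y $ k $ j) differentiable (at x)"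
    and "\<And>k j. (\<lambda>y. B y $ k $ j) differentiable (at x)"
  shows "partial_matrix i (\<lambda>y. A y ** B y) x
    = partial_matrix i A x ** B x + A x ** partial_matrix i B x"
proof -
  have "((\<lambda>y. (A y ** B y) $ k $ j) has_derivative
      (\<lambda>v. \<Sum>m\<in>UNIV. A x $ k $ m * frechet_derivative (\<lambda>y. B y $ m $ j) (at x) v
        + frechet_derivative (\<lambda>y. A y $ k $ m) (at x) v * B x $ m $ j)) (at x)" for k j
    unfolding matrix_matrix_mult_def using assms
    by (auto intro!: has_derivative_sum has_derivative_mult simp: frechet_derivative_works)
  from partial_eq_derivative[OF this] show ?thesis
    by (simp add: partial_matrix_def vec_eq_iff partial_def matrix_matrix_mult_def
        sum.distrib mult.commute add.commute)
qed

lemma metric_mul_christoffel_matrix: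
  assumes "det (g x) \<noteq> 0"
  shows "(g x ** christoffel_matrix g x i) $ a $ j = (partial i (\<lambda>y. g y $ j $ a) x
    + partial j (\<lambda>y. g y $ i $ a) x - partial a (\<lambda>y. g y $ i $ j) x) / 2"
proof -
  define \<Gamma> where "\<Gamma> l = partial i (\<lambda>y. g y $ j $ l) x + partial j (\<lambda>y. g y $ i $ l) x
    - partial l (\<lambda>y. g y $ i $ j) x" for l
  have "(g x ** christoffel_matrix g x i) $ a $ j
      = (\<Sum>k\<in>UNIV. \<Sum>l\<in>UNIV. g x $ a $ k * matrix_inv (g x) $ k $ l * \<Gamma> l) / 2"
    by (simp add: matrix_matrix_mult_def christoffel_matrix_def christoffel_def \<Gamma>_def
        sum_distrib_left sum_divide_distrib mult.assoc)
  also have "\<dots> = (\<Sum>l\<in>UNIV. \<Sum>k\<in>UNIV. g x $ a $ k * matrix_inv (g x) $ k $ l * \<Gamma> l) / 2"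
    by (subst sum.swap) (rule refl)
  also have "\<dots> = (\<Sum>l\<in>UNIV. (g x ** matrix_inv (g x)) $ a $ l * \<Gamma> l) / 2"
    by (simp add: matrix_matrix_mult_def sum_distrib_right)
  also have "\<dots> = \<Gamma> a / 2"
    by (simp add: matrix_mul_matrix_inv[OF assms] mat_def if_distrib if_distribR cong: if_cong)
  finally show ?thesis
    by (simp add: \<Gamma>_def)
qed

lemma partial_matrix_metric_christoffel:
  assumes "open U" "x \<in> U" "\<And>y. y \<in> U \<Longrightarrow> transpose (g y) = g y" "det (g x) \<noteq> 0"
    and "\<And>k j. (\<lambda>y. g y $ k $ j) differentiable (at x)"
  shows "partial_matrix i g x
    = g x ** christoffel_matrix g x i + transpose (christoffel_matrix g x i) ** g x"
proof -
  have "partial_matrix l g x = partial_matrix l (\<lambda>y. transpose (g y)) x" for l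
    using partial_matrix_cong_open[OF assms(5,1,2)] assms(3) by metis
  then have dsym: "partial l (\<lambda>y. g y $ a $ b) x = partial l (\<lambda>y. g y $ b $ a) x" for l a b
    by (simp add: partial_matrix_transpose vec_eq_iff partial_matrix_def transpose_def)
  have "transpose (christoffel_matrix g x i) ** g x = transpose (g x ** christoffel_matrix g x i)"
    using assms(3)[OF assms(2)] by (simp add: matrix_transpose_mul)
  then have "(g x ** christoffel_matrix g x i + transpose (christoffel_matrix g x i) ** g x) $ j $ l
      = partial_matrix i g x $ j $ l" for j l
    using dsym[of i l j]
    by (simp add: metric_mul_christoffel_matrix[of g x, OF assms(4)] partial_matrix_def
        transpose_def field_simps)
  then show ?thesis
    by (simp add: vec_eq_iff)
qed

lemma differentiable_matrix_mult_entry: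
  fixes A :: "'a::real_normed_vector \<Rightarrow> real^'m^'k" and B :: "'a \<Rightarrow> real^'l^'m"
  assumes "\<And>k j. (\<lambda>y. A y $ k $ j) differentiable (at x)"
    and "\<And>k j. (\<lambda>y. B y $ k $ j) differentiable (at x)"
  shows "(\<lambda>y. (A y ** B y) $ k $ j) differentiable (at x)"
  unfolding matrix_matrix_mult_def vec_lambda_beta
  by (intro differentiable_sum[OF finite] ballI differentiable_mult assms)

lemma nablaJ_coord_eq:
  "nablaJ_coord g J x i
    = partial_matrix i J x + christoffel_matrix g x i ** J x - J x ** christoffel_matrix g x i"
  by (simp add: nablaJ_coord_def partial_matrix_def christoffel_matrix_def matrix_matrix_mult_def
      vec_eq_iff mult.commute)

lemma smooth_on_differentiable: "smooth_on U f \<Longrightarrow> x \<in> U \<Longrightarrow> f differentiable (at x)"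
  unfolding smooth_on_def by (metis iter_partial.simps(1))

lemma metallic_pR_at:
  assumes "metallic_pR U g J p q" and "y \<in> U"
  shows metallic_pR_metric_symmetric: "transpose (g y) = g y"
    and metallic_pR_metric_nondegenerate: "det (g y) \<noteq> 0"
    and metallic_pR_selfadjoint: "transpose (J y) ** g y = g y ** J y"
    and metallic_pR_square: "J y ** J y = p *\<^sub>R J y + q *\<^sub>R mat 1"
  using assms by (simp_all add: metallic_pR_def flip: gmetric_adjoint_iff)

context
  fixes U :: "(real^'n::finite) set" and g J :: "real^'n \<Rightarrow> real^'n^'n" and p q :: real
    and x :: "real^'n"
  assumes metallic: "metallic_pR U g J p q" and x: "x \<in> U"
begin

lemma metallic_differentiable:
  shows metallic_differentiable_metric: "(\<lambda>y. g y $ k $ j) differentiable (at x)"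
    and metallic_differentiable_structure: "(\<lambda>y. J y $ k $ j) differentiable (at x)"
  using metallic x unfolding metallic_pR_def by (blast intro: smooth_on_differentiable)+

lemma metallic_partial_anticommutes:
  "partial_matrix i J x ** J x + J x ** partial_matrix i J x = p *\<^sub>R partial_matrix i J x"
proof -
  have "partial_matrix i (\<lambda>y. J y ** J y) x = partial_matrix i (\<lambda>y. p *\<^sub>R J y + q *\<^sub>R mat 1) x"
    using metallic x
    by (intro partial_matrix_cong_open differentiable_matrix_mult_entry metallic_differentiable)
      (auto simp: metallic_pR_def metallic_pR_square[OF metallic])
  then show ?thesis
    by (simp add: partial_matrix_mult partial_matrix_scaleR_add_const metallic_differentiable)
qed

lemma metallic_partial_selfadjoint:
  "partial_matrix i g x ** J x + g x ** partial_matrix i J x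
    = transpose (partial_matrix i J x) ** g x + transpose (J x) ** partial_matrix i g x"
proof -
  have "partial_matrix i (\<lambda>y. g y ** J y) x = partial_matrix i (\<lambda>y. transpose (J y) ** g y) x"
    using metallic x
    by (intro partial_matrix_cong_open differentiable_matrix_mult_entry metallic_differentiable)
      (auto simp: metallic_pR_def metallic_pR_selfadjoint[OF metallic])
  then show ?thesis
    by (simp add: partial_matrix_mult partial_matrix_transpose metallic_differentiable transpose_nth)
qed

lemma nablaJ_anticommutes:
  "nablaJ g J x X ** J x + J x ** nablaJ g J x X = p *\<^sub>R nablaJ g J x X"
proof -
  let ?S = "{N. N ** J x + J x ** N = p *\<^sub>R N}"
  have "nablaJ_coord g J x i \<in> ?S" for i
  proof -
    have "partial_matrix i J x \<in> ?S"
      using metallic_partial_anticommutes by simp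
    moreover have "christoffel_matrix g x i ** J x - J x ** christoffel_matrix g x i \<in> ?S"
      using commutator_anticommutes_metallic[OF metallic_pR_square[OF metallic x]] by simp
    ultimately show ?thesis
      unfolding nablaJ_coord_eq add_diff_eq[symmetric]
      by (rule subspace_add[OF subspace_anticommutes_metallic])
  qed
  then have "nablaJ g J x X \<in> ?S"
    unfolding nablaJ_def by (intro subspace_sum subspace_scale subspace_anticommutes_metallic)
  then show ?thesis
    by simp
qed

lemma nablaJ_selfadjoint: "transpose (nablaJ g J x X) ** g x = g x ** nablaJ g J x X"
proof -
  let ?S = "{N. transpose N ** g x = g x ** N}"
  have "partial_matrix i g x
      = g x ** christoffel_matrix g x i + transpose (christoffel_matrix g x i) ** g x" for i
    using metallic x
    by (intro partial_matrix_metric_christoffel[where U = U] metallic_differentiable_metric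
        metallic_pR_metric_symmetric[OF metallic] metallic_pR_metric_nondegenerate[OF metallic])
      (simp_all add: metallic_pR_def)
  then have "nablaJ_coord g J x i \<in> ?S" for i
    unfolding nablaJ_coord_eq
    using selfadjoint_derivative_plus_commutator[OF metallic_pR_selfadjoint[OF metallic x]
        metallic_partial_selfadjoint]
    by simp
  then have "nablaJ g J x X \<in> ?S"
    unfolding nablaJ_def by (intro subspace_sum subspace_scale subspace_selfadjoint)
  then show ?thesis
    by simp
qed

lemma trace_nablaJ: "p\<^sup>2 + 4 * q \<noteq> 0 \<Longrightarrow> trace (nablaJ g J x X) = 0"
  by (rule trace_eq_zero_if_anticommutes_metallic[OF metallic_pR_square[OF metallic x]
        nablaJ_anticommutes])

end

theorem mainTheorem2:
  fixes U :: "(real^'n::finite) set"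
    and g J :: "real^'n \<Rightarrow> real^'n^'n"
    and p q :: real
  assumes "metallic_pR U g J p q"
    and "p\<^sup>2 + 4 * q \<noteq> 0"
    and "\<forall>x\<in>U. \<forall>X Y. dJ g J x X Y = 0"
  shows "\<forall>x\<in>U. \<forall>E. orthonormal_frame (g x) E \<longrightarrow> deltaJ g J x E = 0"
proof (intro ballI allI impI)
  fix x E
  assume x: "x \<in> U" and frame: "orthonormal_frame (g x) E"
  let ?N = "nablaJ g J x" and ?\<epsilon> = "\<lambda>a. gmetric (g x) (E a) (E a)"
  have "gmetric (g x) (deltaJ g J x E) Y = 0" for Y
  proof -
    have "gmetric (g x) (deltaJ g J x E) Y
        = - (\<Sum>a\<in>UNIV. ?\<epsilon> a * gmetric (g x) (?N (E a) *v E a) Y)"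
      by (simp add: deltaJ_def gmetric_def inner_sum_left)
    also have "\<dots> = - (\<Sum>a\<in>UNIV. ?\<epsilon> a * gmetric (g x) (E a) (?N Y *v E a))"
      using assms(3) x nablaJ_selfadjoint[OF assms(1) x]
      by (simp add: dJ_def gmetric_adjoint_iff[symmetric])
    also have "\<dots> = - trace (?N Y)"
      using frame by (simp add: orthonormal_frame_trace)
    finally show ?thesis
      using trace_nablaJ[OF assms(1) x assms(2)] by simp
  qed
  then show "deltaJ g J x E = 0"
    by (intro gmetric_nondegenerate[OF metallic_pR_metric_nondegenerate[OF assms(1) x]] allI)
qed

end
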